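(* A mixed graph $M_G$ has all its eigenvalues in $\{-1,1\}$ if and only if $M_G$ is switching equivalent to $tK_2$ (the disjoint union of $t$ undirected edges) for some positive integer $t$.
   Context: A mixed graph $M_G$ is obtained from a finite simple graph $G$ by orienting the edges of some subset of $E(G)$. With $\omega=\frac{1+\mathbf{i}\sqrt3}{2}$, $N(M_G)$ has $(u,v)$-entry $\omega$ if $\overrightarrow{uv}$ is an arc, $\bar\omega$ if $\overrightarrow{vu}$ is an arc, $1$ for an undirected edge, $0$ otherwise; the eigenvalues of $M_G$ are those of $N(M_G)$. $\mathbb{T}_6=\{1,-1,\omega,\bar\omega,-\omega,-\bar\omega\}$. Given a partition $V=\bigcup_{j\in\mathbb{T}_6}V_j$ into possibly empty sets, an edge or arc $xy$ has type $(j,k)$ if $x\in V_j,y\in V_k$ (arcs directed from $x$ to $y$); the partition is admissible if every undirected edge has type $(j,j)$ or $(j,\omega j)$ and every arc has type $(j,j)$, $(j,\bar\omega j)$ or $(j,-\omega j)$ for some $j$; a three-way switching replaces each undirected edge of type $(j,\omega j)$ by an arc from $V_j$ to $V_{\omega j}$, each arc of type $(j,\bar\omega j)$ by an undirected edge, and reverses each arc of type $(j,-\omega j)$. Two mixed graphs are switching equivalent if one is obtained from the other by a sequence of three-way switchings and reversals of all arcs (taking the converse). *)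

theory Defs
  imports "HOL-Analysis.Analysis"
begin

text \<open>A mixed graph on the (finite, nonempty) vertex type 'n is encoded by a set D of
ordered pairs: an undirected edge uv is present iff both (u,v) and (v,u) are in D,
an arc from u to v is present iff (u,v) is in D but (v,u) is not.\<close>

definition mixed_graph :: "('n \<times> 'n) set \<Rightarrow> bool" where
  "mixed_graph D \<longleftrightarrow> (\<forall>x. (x, x) \<notin> D)"

definition und_edge :: "('n \<times> 'n) set \<Rightarrow> 'n \<Rightarrow> 'n \<Rightarrow> bool" where
  "und_edge D u v \<longleftrightarrow> (u, v) \<in> D \<and> (v, u) \<in> D"

definition arc :: "('n \<times> 'n) set \<Rightarrow> 'n \<Rightarrow> 'n \<Rightarrow> bool" where
  "arc D u v \<longleftrightarrow> (u, v) \<in> D \<and> (v, u) \<notin> D"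

definition omega :: complex where
  "omega = (1 + \<i> * complex_of_real (sqrt 3)) / 2"

definition T6 :: "complex set" where
  "T6 = {1, -1, omega, cnj omega, - omega, - cnj omega}"

definition Nmat :: "('n::finite \<times> 'n) set \<Rightarrow> complex ^ 'n ^ 'n" where
  "Nmat D = (\<chi> u v. if und_edge D u v then 1
                     else if arc D u v then omega
                     else if arc D v u then cnj omega
                     else 0)"

definition is_eigenvalue :: "complex ^ 'n ^ 'n \<Rightarrow> complex \<Rightarrow> bool" where
  "is_eigenvalue A c \<longleftrightarrow> (\<exists>x. x \<noteq> 0 \<and> A *v x = c *s x)"

text \<open>A partition V = union of V_j (j in T6) is encoded by f with f x = j iff x in V_j.\<close>
definition admissible :: "('n \<times> 'n) set \<Rightarrow> ('n \<Rightarrow> complex) \<Rightarrow> bool" where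
  "admissible D f \<longleftrightarrow> (\<forall>x. f x \<in> T6) \<and>
     (\<forall>x y. und_edge D x y \<longrightarrow> f y = f x \<or> f y = omega * f x \<or> f x = omega * f y) \<and>
     (\<forall>x y. arc D x y \<longrightarrow> f y = f x \<or> f y = cnj omega * f x \<or> f y = - omega * f x)"

definition three_way_switch :: "('n \<times> 'n) set \<Rightarrow> ('n \<Rightarrow> complex) \<Rightarrow> ('n \<times> 'n) set" where
  "three_way_switch D f = {(u, v).
      (und_edge D u v \<and> (f v = f u \<or> f v = omega * f u)) \<or>
      (arc D u v \<and> (f v = f u \<or> f v = cnj omega * f u)) \<or>
      (arc D v u \<and> (f u = cnj omega * f v \<or> f u = - omega * f v))}"

definition switch_step :: "('n \<times> 'n) set \<Rightarrow> ('n \<times> 'n) set \<Rightarrow> bool" where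
  "switch_step D D' \<longleftrightarrow> (\<exists>f. admissible D f \<and> D' = three_way_switch D f) \<or> D' = converse D"

definition switching_equivalent :: "('n \<times> 'n) set \<Rightarrow> ('n \<times> 'n) set \<Rightarrow> bool" where
  "switching_equivalent D D' \<longleftrightarrow> (\<lambda>A B. switch_step A B \<or> switch_step B A)\<^sup>*\<^sup>* D D'"

text \<open>The mixed graph D (on the whole vertex type) is t K_2: t disjoint undirected edges
covering all vertices (a perfect matching of undirected edges, no arcs).\<close>
definition is_tK2 :: "nat \<Rightarrow> ('n::finite \<times> 'n) set \<Rightarrow> bool" where
  "is_tK2 t D \<longleftrightarrow> mixed_graph D \<and> sym D \<and> (\<forall>x. \<exists>!y. (x, y) \<in> D) \<and> CARD('n) = 2 * t"

end

(* N(M_G) is Hermitian, so all its eigenvalues lie in {-1, 1} iff N^2 = I. The diagonal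
   entry (N^2)_uu counts the neighbours of u in the underlying graph, and N_uv N_vu = 1 for
   every edge or arc since omega * cnj omega = 1; hence N^2 = I iff every vertex has exactly
   one neighbour, i.e. the underlying graph is a perfect matching. Switchings and the converse
   preserve the underlying graph, and a perfect matching with some edges oriented becomes tK_2
   after one three-way switching that puts the head of every arc into V_(cnj omega). *)

theory Submission
  imports Defs "HOL-Computational_Algebra.Fundamental_Theorem_Algebra"
begin

definition poly_apply :: "'a::field^'n^'n \<Rightarrow> 'a poly \<Rightarrow> 'a^'n \<Rightarrow> 'a^'n" where
  "poly_apply A p = fold_coeffs (\<lambda>a f v. a *s v + A *v f v) p (\<lambda>v. 0)"

lemma poly_apply_0 [simp]: "poly_apply A 0 v = 0"
  by (simp add: poly_apply_def)

lemma poly_apply_pCons [simp]: "poly_apply A (pCons a p) v = a *s v + A *v poly_apply A p v"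
  by (cases "p = 0 \<and> a = 0") (auto simp: poly_apply_def)

lemma poly_apply_add: "poly_apply A (p + q) v = poly_apply A p v + poly_apply A q v"
proof (induction p arbitrary: q)
  case (pCons a p)
  then show ?case
    by (cases q) (simp add: algebra_simps)
qed simp

lemma poly_apply_smult: "poly_apply A (smult c p) v = c *s poly_apply A p v"
  by (induction p) (simp_all add: vec.scale vec.scale_right_distrib)

lemma poly_apply_mult: "poly_apply A (p * q) v = poly_apply A p (poly_apply A q v)"
  by (induction p) (simp_all add: poly_apply_add poly_apply_smult)

lemma poly_apply_monom: "poly_apply A (monom c k) v = c *s ((*v) A ^^ k) v"
  by (induction k) (simp_all add: monom_0 monom_Suc vec.scale)

lemma poly_apply_sum: "poly_apply A (\<Sum>i\<in>I. p i) v = (\<Sum>i\<in>I. poly_apply A (p i) v)"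
  by (induction I rule: infinite_finite_induct) (simp_all add: poly_apply_add)

lemma poly_apply_linear_factor: "poly_apply A [:- a, 1:] v = A *v v - a *s v"
  by simp

lemma exists_poly_apply_eq_0:
  fixes A :: "'a::field^'n^'n"
  shows "\<exists>p. p \<noteq> 0 \<and> poly_apply A p v = 0"
proof -
  define n where "n = CARD('n)"
  define f where "f k = ((*v) A ^^ k) v" for k
  \<comment> \<open>The n + 1 vectors A^k v with k \<le> n are linearly dependent, or two of them coincide.\<close>
  show ?thesis
  proof (cases "inj_on f {..n}")
    case False
    then obtain i j where ij: "i \<noteq> j" "f i = f j"
      by (auto simp: inj_on_def)
    define p where "p = monom (1::'a) i + monom (- 1) j"
    have "coeff p i = 1"
      using ij by (simp add: p_def)
    moreover have "poly_apply A p v = f i - f j"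
      by (simp add: p_def poly_apply_add poly_apply_monom f_def)
    ultimately show ?thesis
      using ij(2) by (metis coeff_0 right_minus_eq zero_neq_one)
  next
    case True
    define V where "V = f ` {..n}"
    have "card V = Suc n"
      using True by (simp add: V_def card_image)
    moreover have "vec.dim V \<le> n"
      using vec.dim_subset_UNIV[of V] by (simp add: n_def vec.dimension_def card_cart_basis)
    ultimately have "vec.dependent V"
      by (intro vec.dependent_biggerset_general) auto
    then obtain u where u: "\<exists>w\<in>V. u w \<noteq> 0" "(\<Sum>w\<in>V. u w *s w) = 0"
      using vec.dependent_finite[of V] by (auto simp: V_def)
    define p where "p = (\<Sum>k\<le>n. monom (u (f k)) k)"
    have coeff_p: "coeff p k = (if k \<le> n then u (f k) else 0)" for k
      by (simp add: p_def coeff_sum)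
    have "poly_apply A p v = (\<Sum>k\<le>n. u (f k) *s f k)"
      by (simp add: p_def poly_apply_sum poly_apply_monom f_def)
    also have "\<dots> = (\<Sum>w\<in>V. u w *s w)"
      unfolding V_def by (simp add: sum.reindex[OF True])
    finally have "poly_apply A p v = 0"
      using u(2) by simp
    moreover obtain k where "k \<le> n" "u (f k) \<noteq> 0"
      using u(1) by (auto simp: V_def)
    then have "coeff p k \<noteq> 0"
      by (simp add: coeff_p)
    ultimately show ?thesis
      by (metis coeff_0)
  qed
qed

lemma eigenvector_in_subspace_if_poly_apply_eq_0:
  fixes A :: "complex^'n^'n"
  assumes S: "vec.subspace S" and invariant: "\<And>x. x \<in> S \<Longrightarrow> A *v x \<in> S"
  shows "p \<noteq> 0 \<Longrightarrow> v \<in> S \<Longrightarrow> v \<noteq> 0 \<Longrightarrow> poly_apply A p v = 0 \<Longrightarrow>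
    \<exists>y\<in>S. y \<noteq> 0 \<and> (\<exists>c. A *v y = c *s y)"
proof (induction "degree p" arbitrary: p v rule: less_induct)
  case less
  show ?case
  proof (cases "degree p = 0")
    case True
    then obtain c where "p = [:c:]"
      by (metis degree_eq_zeroE)
    with less.prems show ?thesis
      by simp
  next
    case False
    then obtain a where "poly p a = 0"
      using fundamental_theorem_of_algebra constant_degree by metis
    then obtain q where p: "p = q * [:- a, 1:]"
      by (metis dvdE mult.commute poly_eq_0_iff_dvd)
    with less.prems(1) have "q \<noteq> 0"
      by auto
    then have "degree q < degree p"
      unfolding p by (subst degree_mult_eq) auto
    define w where "w = A *v v - a *s v"
    have "poly_apply A q w = 0"
      using less.prems(4) by (simp only: p w_def poly_apply_mult poly_apply_linear_factor)
    show ?thesis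
    proof (cases "w = 0")
      case True
      then show ?thesis
        using less.prems(2,3) by (auto simp: w_def)
    next
      case False
      have "w \<in> S"
        unfolding w_def using less.prems(2) S invariant by (intro vec.subspace_diff vec.subspace_scale) auto
      then show ?thesis
        using less.hyps[OF \<open>degree q < degree p\<close> \<open>q \<noteq> 0\<close> _ False \<open>poly_apply A q w = 0\<close>]
        by blast
    qed
  qed
qed

lemma invariant_subspace_has_eigenvector:
  fixes A :: "complex^'n^'n"
  assumes "vec.subspace S" "\<And>x. x \<in> S \<Longrightarrow> A *v x \<in> S" "v \<in> S" "v \<noteq> 0"
  shows "\<exists>y\<in>S. y \<noteq> 0 \<and> (\<exists>c. A *v y = c *s y)"
  using exists_poly_apply_eq_0[of A v] eigenvector_in_subspace_if_poly_apply_eq_0[OF assms(1,2)] assms(3,4)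
  by blast

definition hermitian :: "complex^'n^'n \<Rightarrow> bool" where
  "hermitian N \<longleftrightarrow> (\<forall>i j. N $ i $ j = cnj (N $ j $ i))"

lemma inner_vec_complex: "inner x y = Re (\<Sum>i\<in>UNIV. cnj (x $ i) * y $ i)"
  for x y :: "complex^'n"
  by (simp add: inner_vec_def inner_complex_def)

lemma hermitian_inner_adjoint:
  assumes "hermitian N"
  shows "inner (N *v x) y = inner x (N *v y)"
proof -
  have cnj_N: "cnj (N $ i $ j) = N $ j $ i" for i j
    using assms unfolding hermitian_def by (metis complex_cnj_cnj)
  have "(\<Sum>i\<in>UNIV. cnj ((N *v x) $ i) * y $ i) = (\<Sum>i\<in>UNIV. \<Sum>j\<in>UNIV. cnj (x $ j) * (N $ j $ i * y $ i))"
    by (simp add: matrix_vector_mult_def sum_distrib_left sum_distrib_right cnj_N mult_ac)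
  also have "\<dots> = (\<Sum>j\<in>UNIV. cnj (x $ j) * (N *v y) $ j)"
    by (subst sum.swap) (simp add: matrix_vector_mult_def sum_distrib_left)
  finally show ?thesis
    by (simp add: inner_vec_complex)
qed

lemma hermitian_square_eq_id_if_eigenvalues_pm1:
  assumes "hermitian N"
    and eigenvalues: "\<And>c. is_eigenvalue N c \<Longrightarrow> c \<in> {- 1, 1}"
  shows "N ** N = mat 1"
proof (rule ccontr)
  \<comment> \<open>The range of M = N^2 - 1 is N-invariant, so it contains an eigenvector y = M w of N.
    Since the eigenvalue squares to 1, M y = 0, and the self-adjointness of M gives
    |y|^2 = <w, M y> = 0.\<close>
  define M where "M = N ** N - mat 1"
  have M_apply: "M *v z = N *v (N *v z) - z" for z
    by (simp add: M_def matrix_vector_mult_diff_rdistrib matrix_vector_mul_assoc)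
  assume "N ** N \<noteq> mat 1"
  then obtain x where "M *v x \<noteq> 0"
    by (metis M_def matrix_eq matrix_vector_mult_0 right_minus_eq)
  moreover have "vec.subspace (range ((*v) M))"
    by (simp add: vec.linear_subspace_image)
  moreover have "N *v (M *v z) = M *v (N *v z)" for z
    by (simp add: M_apply matrix_vector_mult_diff_distrib)
  ultimately obtain y c where y: "y \<in> range ((*v) M)" "y \<noteq> 0" "N *v y = c *s y"
    using invariant_subspace_has_eigenvector[of "range ((*v) M)" N "M *v x"] by fastforce
  then have "is_eigenvalue N c"
    by (auto simp: is_eigenvalue_def)
  then have "c * c = 1"
    using eigenvalues by fastforce
  then have "M *v y = 0"
    by (simp add: M_apply y(3) vec.scale)
  obtain w where "y = M *v w"
    using y(1) by blast
  have "inner y y = inner (N *v (N *v w)) y - inner w y"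
    by (simp add: \<open>y = M *v w\<close> M_apply inner_diff_left)
  also have "\<dots> = inner w (M *v y)"
    by (simp add: M_apply inner_diff_right hermitian_inner_adjoint[OF \<open>hermitian N\<close>])
  finally show False
    using \<open>M *v y = 0\<close> \<open>y \<noteq> 0\<close> by simp
qed

lemma eigenvalue_in_pm1_if_square_eq_id:
  fixes N :: "complex^'n^'n"
  assumes "N ** N = mat 1" "is_eigenvalue N c"
  shows "c \<in> {- 1, 1}"
proof -
  obtain x where x: "x \<noteq> 0" "N *v x = c *s x"
    using assms(2) by (auto simp: is_eigenvalue_def)
  have "(c * c) *s x = 1 *s x"
    using assms(1) x(2) by (metis matrix_vector_mul_assoc matrix_vector_mul_lid vec.scale vec.scale_one vec.scale_scale)
  then have "c * c = 1"
    using x(1) vec.scale_cancel_right by blast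
  then show ?thesis
    by (auto simp: square_eq_1_iff)
qed

definition one_regular :: "('n \<times> 'n) set \<Rightarrow> bool" where
  "one_regular E \<longleftrightarrow> (\<forall>u. \<exists>!v. (u, v) \<in> E)"

lemma omega_mult_cnj_omega: "omega * cnj omega = 1"
proof -
  have omega: "omega = Complex (1 / 2) (sqrt 3 / 2)"
    by (simp add: omega_def complex_eq_iff)
  have "sqrt 3 * sqrt 3 = (3::real)"
    by simp
  then show ?thesis
    unfolding omega by (simp add: complex_eq_iff field_simps)
qed

lemma Nmat_hermitian: "hermitian (Nmat D)"
  by (auto simp: hermitian_def Nmat_def und_edge_def arc_def)

lemma Nmat_eq_0_iff: "Nmat D $ u $ v = 0 \<longleftrightarrow> (u, v) \<notin> D \<union> D\<inverse>"
  using omega_mult_cnj_omega by (auto simp: Nmat_def und_edge_def arc_def)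

lemma Nmat_mult_swap: "Nmat D $ u $ v * Nmat D $ v $ u = (if (u, v) \<in> D \<union> D\<inverse> then 1 else 0)"
  using omega_mult_cnj_omega by (auto simp: Nmat_def und_edge_def arc_def mult.commute)

lemma Nmat_square_diagonal: "(Nmat D ** Nmat D) $ u $ u = of_nat (card {v. (u, v) \<in> D \<union> D\<inverse>})"
  by (simp add: matrix_matrix_mult_def Nmat_mult_swap sum.If_cases)

lemma Nmat_square_eq_id_iff: "Nmat D ** Nmat D = mat 1 \<longleftrightarrow> one_regular (D \<union> D\<inverse>)"
proof
  let ?N = "Nmat D"
  assume "?N ** ?N = mat 1"
  then have "card {v. (u, v) \<in> D \<union> D\<inverse>} = 1" for u
    using Nmat_square_diagonal[of D u] by (simp add: mat_def)
  then have "\<exists>v. {w. (u, w) \<in> D \<union> D\<inverse>} = {v}" for u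
    by (simp add: card_1_singleton_iff)
  then show "one_regular (D \<union> D\<inverse>)"
    unfolding one_regular_def by (metis mem_Collect_eq singleton_iff)
next
  let ?N = "Nmat D" and ?E = "D \<union> D\<inverse>"
  assume regular: "one_regular ?E"
  have "(?N ** ?N) $ u $ w = mat 1 $ u $ w" for u w
  proof -
    obtain p where p: "(u, p) \<in> ?E" and unique: "\<And>v. (u, v) \<in> ?E \<Longrightarrow> v = p"
      using regular unfolding one_regular_def by blast
    have "(?N ** ?N) $ u $ w = (\<Sum>v\<in>UNIV. ?N $ u $ v * ?N $ v $ w)"
      by (simp add: matrix_matrix_mult_def)
    also have "\<dots> = (\<Sum>v\<in>{p}. ?N $ u $ v * ?N $ v $ w)"
      by (rule sum.mono_neutral_right) (use unique in \<open>auto simp: Nmat_eq_0_iff\<close>)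
    also have "\<dots> = (if w = u then 1 else 0)"
    proof (cases "w = u")
      case True
      then show ?thesis
        using p by (simp add: Nmat_mult_swap)
    next
      case False
      then have "(p, w) \<notin> ?E"
        using p regular unfolding one_regular_def by blast
      then show ?thesis
        using False by (simp add: Nmat_eq_0_iff[THEN iffD2])
    qed
    finally show ?thesis
      by (simp add: mat_def)
  qed
  then show "?N ** ?N = mat 1"
    by (simp add: vec_eq_iff)
qed

lemma three_way_switch_subset_underlying: "three_way_switch D f \<subseteq> D \<union> D\<inverse>"
  by (auto simp: three_way_switch_def und_edge_def arc_def)

lemma underlying_three_way_switch:
  assumes "admissible D f"
  shows "three_way_switch D f \<union> (three_way_switch D f)\<inverse> = D \<union> D\<inverse>"
proof -
  let ?S = "three_way_switch D f"
  have "(x, y) \<in> ?S \<union> ?S\<inverse>" if "(x, y) \<in> D" for x y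
  proof (cases "(y, x) \<in> D")
    case True
    then have "und_edge D x y" "und_edge D y x"
      using that by (auto simp: und_edge_def)
    moreover have "f y = f x \<or> f y = omega * f x \<or> f x = omega * f y"
      using assms \<open>und_edge D x y\<close> unfolding admissible_def by blast
    ultimately show ?thesis
      by (elim disjE) (simp_all add: three_way_switch_def)
  next
    case False
    then have "arc D x y"
      using that by (simp add: arc_def)
    moreover have "f y = f x \<or> f y = cnj omega * f x \<or> f y = - omega * f x"
      using assms \<open>arc D x y\<close> unfolding admissible_def by blast
    ultimately show ?thesis
      by (elim disjE) (simp_all add: three_way_switch_def)
  qed
  then show ?thesis
    using three_way_switch_subset_underlying[of D f] by auto
qed

lemma underlying_switch_step:
  assumes "switch_step D H"
  shows "H \<union> H\<inverse> = D \<union> D\<inverse>"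
  using assms unfolding switch_step_def
proof
  assume "\<exists>f. admissible D f \<and> H = three_way_switch D f"
  then show ?thesis
    using underlying_three_way_switch by blast
qed auto

lemma underlying_switching_equivalent:
  assumes "switching_equivalent D H"
  shows "H \<union> H\<inverse> = D \<union> D\<inverse>"
  using assms unfolding switching_equivalent_def
proof (induction rule: rtranclp_induct)
  case (step H H')
  then show ?case
    using underlying_switch_step by metis
qed simp

lemma switch_step_to_underlying_if_one_regular:
  assumes "one_regular (D \<union> D\<inverse>)"
  shows "switch_step D (D \<union> D\<inverse>)"
proof -
  have arc_from_neighbour: "w = v" if "arc D v x" "(x, w) \<in> D \<union> D\<inverse>" for v x w
    using assms that unfolding one_regular_def arc_def by blast
  \<comment> \<open>Heads of arcs go to V_(cnj omega), all other vertices to V_1: each arc then has type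
    (1, cnj omega) and becomes an undirected edge, each undirected edge has type (1, 1).\<close>
  define f where "f u = (if \<exists>v. arc D v u then cnj omega else 1)" for u
  have no_arc_into_und_edge: "\<nexists>v. arc D v x" if "und_edge D x y" for x y
    using that arc_from_neighbour unfolding und_edge_def arc_def by blast
  have no_arc_into_tail: "\<nexists>v. arc D v x" if "arc D x y" for x y
    using that arc_from_neighbour unfolding arc_def by blast
  have f_und_edge: "f x = 1 \<and> f y = 1" if "und_edge D x y" for x y
    using that no_arc_into_und_edge[OF that] no_arc_into_und_edge[of y x]
    by (simp add: f_def und_edge_def)
  have f_arc: "f x = 1 \<and> f y = cnj omega" if "arc D x y" for x y
    using that no_arc_into_tail[OF that] by (auto simp: f_def)
  have "admissible D f"
    unfolding admissible_def
  proof (intro conjI allI impI)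
    show "f x \<in> T6" for x
      by (simp add: f_def T6_def)
    show "f y = f x \<or> f y = omega * f x \<or> f x = omega * f y" if "und_edge D x y" for x y
      using f_und_edge[OF that] by simp
    show "f y = f x \<or> f y = cnj omega * f x \<or> f y = - omega * f x" if "arc D x y" for x y
      using f_arc[OF that] by simp
  qed
  have "(x, y) \<in> three_way_switch D f" if "(x, y) \<in> D \<union> D\<inverse>" for x y
  proof -
    consider "und_edge D x y" | "arc D x y" | "arc D y x"
      using \<open>(x, y) \<in> D \<union> D\<inverse>\<close> unfolding und_edge_def arc_def by blast
    then show ?thesis
    proof cases
      case 1
      then show ?thesis
        using f_und_edge[OF 1] by (simp add: three_way_switch_def)
    next
      case 2
      then show ?thesis
        using f_arc[OF 2] by (simp add: three_way_switch_def)
    next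
      case 3
      then show ?thesis
        using f_arc[OF 3] by (simp add: three_way_switch_def)
    qed
  qed
  then have "D \<union> D\<inverse> = three_way_switch D f"
    using three_way_switch_subset_underlying[of D f] by auto
  then show ?thesis
    unfolding switch_step_def using \<open>admissible D f\<close> by blast
qed

lemma is_tK2_if_one_regular:
  fixes E :: "('n::finite \<times> 'n) set"
  assumes "mixed_graph E" "sym E" "one_regular E"
  shows "is_tK2 (card {{u, v} | u v. (u, v) \<in> E}) E"
proof -
  let ?C = "{{u, v} | u v. (u, v) \<in> E}"
  have neighbour: "\<exists>y. (x, y) \<in> E" for x
    using assms(3) unfolding one_regular_def by blast
  have edge_eq: "c = {x, y}" if c: "c \<in> ?C" and x: "x \<in> c" and xy: "(x, y) \<in> E" for c x y
  proof -
    obtain u v where uv: "c = {u, v}" "(u, v) \<in> E"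
      using c by blast
    moreover have "(v, u) \<in> E"
      using assms(2) uv(2) by (rule symD)
    ultimately show ?thesis
      using x xy assms(3) unfolding one_regular_def by blast
  qed
  have "2 * card ?C = card (\<Union>?C)"
  proof (rule card_partition)
    show "card c = 2" if c: "c \<in> ?C" for c
    proof -
      obtain u v where "c = {u, v}" "(u, v) \<in> E"
        using c by blast
      moreover from this have "u \<noteq> v"
        using assms(1) unfolding mixed_graph_def by blast
      ultimately show ?thesis
        by simp
    qed
    show "c1 \<inter> c2 = {}" if c12: "c1 \<in> ?C" "c2 \<in> ?C" and "c1 \<noteq> c2" for c1 c2
    proof (rule ccontr)
      assume "c1 \<inter> c2 \<noteq> {}"
      then obtain x where x: "x \<in> c1" "x \<in> c2"
        by blast
      obtain y where "(x, y) \<in> E"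
        using neighbour by blast
      then have "c1 = c2"
        using edge_eq[OF c12(1) x(1)] edge_eq[OF c12(2) x(2)] by simp
      with \<open>c1 \<noteq> c2\<close> show False ..
    qed
  qed simp_all
  moreover have "\<Union>?C = UNIV"
  proof -
    have "x \<in> \<Union>?C" for x
    proof -
      obtain y where "(x, y) \<in> E"
        using neighbour by blast
      then show ?thesis
        by blast
    qed
    then show ?thesis
      by blast
  qed
  ultimately have "CARD('n) = 2 * card ?C"
    by simp
  with assms show ?thesis
    unfolding is_tK2_def one_regular_def by blast
qed

lemma one_regular_if_switching_equivalent_tK2:
  assumes "is_tK2 t H" "switching_equivalent D H"
  shows "one_regular (D \<union> D\<inverse>)"
proof -
  have "H \<union> H\<inverse> = H"
    using assms(1) by (simp add: is_tK2_def sym_conv_converse_eq)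
  then show ?thesis
    using underlying_switching_equivalent[OF assms(2)] assms(1)
    by (simp add: is_tK2_def one_regular_def)
qed

theorem theorem6p1:
  fixes D :: "('n::finite \<times> 'n) set"
  assumes "mixed_graph D"
  shows "(\<forall>c. is_eigenvalue (Nmat D) c \<longrightarrow> c \<in> {-1, 1}) \<longleftrightarrow>
         (\<exists>t::nat. t > 0 \<and> (\<exists>H. is_tK2 t H \<and> switching_equivalent D H))"
proof -
  have "(\<forall>c. is_eigenvalue (Nmat D) c \<longrightarrow> c \<in> {-1, 1}) \<longleftrightarrow> Nmat D ** Nmat D = mat 1"
    using hermitian_square_eq_id_if_eigenvalues_pm1[OF Nmat_hermitian] eigenvalue_in_pm1_if_square_eq_id
    by blast
  also have "\<dots> \<longleftrightarrow> one_regular (D \<union> D\<inverse>)"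
    by (rule Nmat_square_eq_id_iff)
  also have "\<dots> \<longleftrightarrow> (\<exists>t::nat. t > 0 \<and> (\<exists>H. is_tK2 t H \<and> switching_equivalent D H))"
  proof
    assume regular: "one_regular (D \<union> D\<inverse>)"
    define t where "t = card {{u, v} | u v. (u, v) \<in> D \<union> D\<inverse>}"
    have "mixed_graph (D \<union> D\<inverse>)" "sym (D \<union> D\<inverse>)"
      using assms by (auto simp: mixed_graph_def sym_def)
    then have "is_tK2 t (D \<union> D\<inverse>)"
      unfolding t_def using regular by (rule is_tK2_if_one_regular)
    moreover from this have "t > 0"
      using finite_UNIV_card_ge_0[where 'a='n] by (simp add: is_tK2_def)
    moreover have "switching_equivalent D (D \<union> D\<inverse>)"
      unfolding switching_equivalent_def
      using switch_step_to_underlying_if_one_regular[OF regular] by (metis (mono_tags) r_into_rtranclp)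
    ultimately show "\<exists>t::nat. t > 0 \<and> (\<exists>H. is_tK2 t H \<and> switching_equivalent D H)"
      by blast
  qed (use one_regular_if_switching_equivalent_tK2 in blast)
  finally show ?thesis .
qed

end
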